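(* Consider a neutral evolutionary model on $N$ sites given by a replacement rule $p$ satisfying the fixation assumption described in the context, with replacement probabilities $e_{ij}$, death rates $d_i$ and site-specific fixation probabilities $\rho_i$. Then for each $i=1,\ldots,N$, $$d_i\rho_i=\sum_{j=1}^N e_{ij}\rho_j.$$
   Context: There are $N$ sites $1,\ldots,N$, each always occupied by one individual of type M (mutant) or R (resident); a state is $\mathbf{s}\in\{\mathrm{M},\mathrm{R}\}^N$. A replacement event is a pair $(R,\alpha)$ with $R\subseteq\{1,\ldots,N\}$ and $\alpha:R\to\{1,\ldots,N\}$. A replacement rule is a probability distribution $p(R,\alpha)$ on replacement events, independent of the state. The evolutionary Markov chain: at each time-step an event $(R,\alpha)$ is drawn with probability $p(R,\alpha)$ and the new state is $s_i'=s_i$ if $i\notin R$, $s_i'=s_{\alpha(i)}$ if $i\in R$. Fixation assumption: there exist a site $i$ and a finite sequence of replacement events, each of positive probability, such that if these events occur consecutively (from any initial state) every site ends up carrying the type initially at site $i$. Define $e_{ij}=\sum_{(R,\alpha):\, j\in R,\ \alpha(j)=i}p(R,\alpha)$ and $d_i=\sum_j e_{ji}=\sum_{(R,\alpha):\, i\in R}p(R,\alpha)$. The site-specific fixation probability $\rho_i$ is the probability that the chain started from the state with M at site $i$ and R elsewhere is eventually absorbed in $(\mathrm{M},\ldots,\mathrm{M})$. *)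

theory Defs
  imports "HOL-Probability.Probability"
begin

text \<open>Sites are the elements of a finite type 'site (N = CARD('site)).
  A state assigns to each site True (type M, mutant) or False (type R, resident).
  A replacement event is a pair (R, alpha); only the restriction of alpha to R matters.
  A replacement rule is a pmf on replacement events.\<close>

type_synonym 'site state = "'site \<Rightarrow> bool"
type_synonym 'site event = "'site set \<times> ('site \<Rightarrow> 'site)"

definition apply_event :: "'site event \<Rightarrow> 'site state \<Rightarrow> 'site state" where
  "apply_event evt s = (\<lambda>i. if i \<in> fst evt then s (snd evt i) else s i)"

definition run_events :: "'site event list \<Rightarrow> 'site state \<Rightarrow> 'site state" where
  "run_events es s = fold apply_event es s"

definition fixation_assumption :: "'site event pmf \<Rightarrow> bool" where
  "fixation_assumption p \<longleftrightarrow>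
     (\<exists>i es. (\<forall>evt\<in>set es. pmf p evt > 0) \<and> (\<forall>s j. run_events es s j = s i))"

definition repl_prob :: "'site event pmf \<Rightarrow> 'site \<Rightarrow> 'site \<Rightarrow> real" where
  "repl_prob p i j = measure_pmf.prob p {evt. j \<in> fst evt \<and> snd evt j = i}"

definition death_rate :: "'site event pmf \<Rightarrow> 'site \<Rightarrow> real" where
  "death_rate p i = measure_pmf.prob p {evt. i \<in> fst evt}"

text \<open>The evolutionary Markov chain is driven by an i.i.d. sequence of events drawn
  from p; the state at time n is obtained by applying the first n events.\<close>
definition fix_prob :: "'site event pmf \<Rightarrow> 'site \<Rightarrow> real" where
  "fix_prob p i = measure (stream_space (measure_pmf p))
     {\<omega>. \<exists>n. run_events (stake n \<omega>) (\<lambda>j. j = i) = (\<lambda>_. True)}"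

end

theory Submission
  imports Defs
begin

text \<open>Read backwards in time, the event sequence gives every site an ancestor: after the
  events es each site carries the initial type of its ancestor \<open>ancestry es\<close>. The fixation
  assumption provides a finite word of positive probability whose ancestry map is constant;
  in an i.i.d. sequence such a word occurs almost surely, so almost surely all sites eventually
  descend from one site c, and the chain fixes on M exactly when c was initially M. Hence the
  fixation probability of any initial state is the sum of the \<open>\<rho>\<^sub>j\<close> over its mutant sites.
  Conditioning on the first event, \<open>\<rho>\<^sub>i = \<Sum>\<^sub>j P(the parent of j is i) \<rho>\<^sub>j\<close>, and that
  probability is \<open>e\<^sub>i\<^sub>j\<close> plus \<open>1 - d\<^sub>i\<close> when j = i.\<close>

abbreviation pmf_streams :: "'a pmf \<Rightarrow> 'a stream measure" where
  "pmf_streams p \<equiv> stream_space (measure_pmf p)"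

lemma space_pmf_streams [simp]: "space (pmf_streams p) = UNIV"
  by (simp add: space_stream_space)

lemma prob_space_pmf_streams: "prob_space (pmf_streams p)"
  by (rule prob_space.prob_space_stream_space[OF prob_space_measure_pmf])

lemma sets_pmf_streams_stake:
  "{\<omega>. Q (stake n \<omega>)} \<in> sets (pmf_streams (p :: 'a::countable pmf))"
proof -
  have "sets (pmf_streams p) = sets (stream_space (count_space UNIV))"
    by (rule sets_stream_space_cong) simp
  moreover have "(\<lambda>\<omega>. Q (stake n \<omega>)) \<in> measurable (stream_space (count_space UNIV)) (count_space UNIV)"
    by (rule measurable_compose[OF measurable_stake]) simp
  ultimately show ?thesis
    by (simp add: pred_def measurable_count_space_eq2 space_stream_space)
qed

lemma sets_pmf_streams_sdrop:
  "B \<in> sets (pmf_streams p) \<Longrightarrow> {\<omega>. sdrop n \<omega> \<in> B} \<in> sets (pmf_streams p)"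
  using measurable_sets[OF measurable_sdrop[of n "measure_pmf p"], of B] by (simp add: vimage_def)

lemma sets_pmf_streams_prefix:
  fixes p :: "'a::countable pmf"
  assumes "B \<in> sets (pmf_streams p)"
  shows "{\<omega>. stake n \<omega> = xs \<and> sdrop n \<omega> \<in> B} \<in> sets (pmf_streams p)"
  using sets.Int[OF sets_pmf_streams_stake sets_pmf_streams_sdrop[OF assms]]
  by (simp add: Collect_conj_eq)

lemma emeasure_pmf_streams_Cons:
  "B \<in> sets (pmf_streams p) \<Longrightarrow>
     emeasure (pmf_streams p) B = (\<integral>\<^sup>+t. emeasure (pmf_streams p) {\<omega>. t ## \<omega> \<in> B} \<partial>measure_pmf p)"
  using prob_space.emeasure_stream_space[OF prob_space_measure_pmf] by simp

lemma measure_pmf_streams_sdrop: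
  assumes "B \<in> sets (pmf_streams p)"
  shows "measure (pmf_streams p) {\<omega>. sdrop n \<omega> \<in> B} = measure (pmf_streams p) B"
proof -
  have "emeasure (pmf_streams p) {\<omega>. sdrop n \<omega> \<in> B} = emeasure (pmf_streams p) B"
  proof (induction n)
    case (Suc n)
    have "emeasure (pmf_streams p) {\<omega>. sdrop (Suc n) \<omega> \<in> B}
        = (\<integral>\<^sup>+t. emeasure (pmf_streams p) {\<omega>. t ## \<omega> \<in> {\<omega>. sdrop (Suc n) \<omega> \<in> B}} \<partial>measure_pmf p)"
      by (rule emeasure_pmf_streams_Cons[OF sets_pmf_streams_sdrop[OF assms]])
    then show ?case by (simp add: Suc measure_pmf.emeasure_space_1)
  qed simp
  then show ?thesis by (simp add: measure_def)
qed

lemma measure_pmf_streams_prefix: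
  fixes p :: "'a::countable pmf"
  assumes "B \<in> sets (pmf_streams p)"
  shows "measure (pmf_streams p) {\<omega>. stake (length xs) \<omega> = xs \<and> sdrop (length xs) \<omega> \<in> B}
    = prod_list (map (pmf p) xs) * measure (pmf_streams p) B"
proof -
  have "emeasure (pmf_streams p) {\<omega>. stake (length xs) \<omega> = xs \<and> sdrop (length xs) \<omega> \<in> B}
      = ennreal (prod_list (map (pmf p) xs)) * emeasure (pmf_streams p) B"
  proof (induction xs)
    case (Cons y ys)
    let ?A = "{\<omega>. stake (length ys) \<omega> = ys \<and> sdrop (length ys) \<omega> \<in> B}"
    let ?A' = "{\<omega>. stake (length (y # ys)) \<omega> = y # ys \<and> sdrop (length (y # ys)) \<omega> \<in> B}"
    have "emeasure (pmf_streams p) ?A' = (\<integral>\<^sup>+t. emeasure (pmf_streams p) {\<omega>. t ## \<omega> \<in> ?A'} \<partial>measure_pmf p)"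
      by (rule emeasure_pmf_streams_Cons[OF sets_pmf_streams_prefix[OF assms]])
    also have "\<dots> = (\<integral>\<^sup>+t. emeasure (pmf_streams p) ?A * indicator {y} t \<partial>measure_pmf p)"
      by (rule nn_integral_cong) (auto split: split_indicator)
    also have "\<dots> = emeasure (pmf_streams p) ?A * pmf p y"
      by (simp add: nn_integral_cmult_indicator emeasure_pmf_single)
    finally show ?case
      by (simp add: Cons ennreal_mult' prod_list_nonneg mult_ac)
  qed simp
  moreover have "0 \<le> prod_list (map (pmf p) xs)"
    by (induction xs) auto
  ultimately show ?thesis
    by (simp add: measure_def enn2real_mult)
qed

lemma measure_pmf_streams_Cons:
  fixes p :: "'a::finite pmf"
  assumes "B \<in> sets (pmf_streams p)"
  shows "measure (pmf_streams p) B = (\<Sum>t\<in>UNIV. pmf p t * measure (pmf_streams p) {\<omega>. t ## \<omega> \<in> B})"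
proof -
  interpret S: prob_space "pmf_streams p" by (rule prob_space_pmf_streams)
  have "emeasure (pmf_streams p) B = (\<integral>\<^sup>+t. ennreal (measure (pmf_streams p) {\<omega>. t ## \<omega> \<in> B}) \<partial>measure_pmf p)"
    by (subst emeasure_pmf_streams_Cons[OF assms]) (simp add: S.emeasure_eq_measure)
  also have "\<dots> = ennreal (\<Sum>t\<in>UNIV. pmf p t * measure (pmf_streams p) {\<omega>. t ## \<omega> \<in> B})"
    by (subst nn_integral_measure_pmf_support[of UNIV]) (auto simp: ennreal_mult'[symmetric] mult.commute)
  finally show ?thesis
    by (simp add: S.emeasure_eq_measure sum_nonneg)
qed

lemma AE_pmf_streams_eventually_stake_in:
  fixes p :: "'a::countable pmf" and W :: "'a list set"
  assumes closed: "\<And>xs ys. ys \<in> W \<Longrightarrow> xs @ ys \<in> W"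
    and "ws \<in> W" and pos: "\<forall>w\<in>set ws. pmf p w > 0"
  shows "AE \<omega> in pmf_streams p. \<exists>n. stake n \<omega> \<in> W"
proof -
  interpret S: prob_space "pmf_streams p" by (rule prob_space_pmf_streams)
  define C where "C = {\<omega>. \<forall>n. stake n \<omega> \<notin> W}"
  define L where "L = length ws"
  define q where "q = prod_list (map (pmf p) ws)"
  have "q > 0"
    unfolding q_def using pos by (induction ws) auto
  have C: "C \<in> sets (pmf_streams p)"
  proof -
    have "C = (\<Inter>n. {\<omega>. stake n \<omega> \<notin> W})"
      by (auto simp: C_def)
    moreover have "{\<omega>. stake n \<omega> \<notin> W} \<in> sets (pmf_streams p)" for n
      using sets_pmf_streams_stake[of "\<lambda>xs. xs \<notin> W"] by simp
    ultimately show ?thesis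
      by (simp add: sets.countable_INT' image_subset_iff)
  qed
  define A1 where "A1 = {\<omega>. sdrop L \<omega> \<in> C}"
  define A2 where "A2 = {\<omega>. stake L \<omega> = ws \<and> sdrop L \<omega> \<in> C}"
  have A1: "A1 \<in> sets (pmf_streams p)"
    unfolding A1_def by (rule sets_pmf_streams_sdrop[OF C])
  have A2: "A2 \<in> sets (pmf_streams p)"
    unfolding A2_def by (rule sets_pmf_streams_prefix[OF C])
  \<comment> \<open>By shift invariance \<open>P(A1) = P(C)\<close> and \<open>P(A2) = q P(C)\<close>; since C misses A2, \<open>q P(C) \<le> 0\<close>.\<close>
  have C_sub: "C \<subseteq> A1 - A2"
  proof
    fix \<omega> assume \<omega>: "\<omega> \<in> C"
    have "stake m (sdrop L \<omega>) \<notin> W" for m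
    proof
      assume "stake m (sdrop L \<omega>) \<in> W"
      then have "stake (L + m) \<omega> \<in> W"
        using closed by (simp only: stake_add[symmetric])
      with \<omega> show False
        by (simp add: C_def)
    qed
    then have "sdrop L \<omega> \<in> C"
      by (simp add: C_def)
    moreover have "stake L \<omega> \<noteq> ws"
      using \<omega> \<open>ws \<in> W\<close> by (auto simp: C_def)
    ultimately show "\<omega> \<in> A1 - A2"
      by (simp add: A1_def A2_def)
  qed
  have "S.prob C \<le> S.prob (A1 - A2)"
    by (rule S.finite_measure_mono[OF C_sub sets.Diff[OF A1 A2]])
  also have "\<dots> = S.prob A1 - S.prob A2"
    by (rule S.finite_measure_Diff[OF A1 A2]) (auto simp: A1_def A2_def)
  also have "\<dots> = (1 - q) * S.prob C"
    using measure_pmf_streams_sdrop[OF C] measure_pmf_streams_prefix[OF C, of ws]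
    by (simp add: A1_def A2_def L_def q_def algebra_simps)
  finally have "S.prob C = 0"
    using \<open>q > 0\<close> by (simp add: algebra_simps mult_le_0_iff order_antisym)
  then show ?thesis
    using C by (intro AE_I'[of C]) (auto simp: C_def S.emeasure_eq_measure)
qed

definition event_parent :: "'site event \<Rightarrow> 'site \<Rightarrow> 'site" where
  "event_parent e i = (if i \<in> fst e then snd e i else i)"

fun ancestry :: "'site event list \<Rightarrow> 'site \<Rightarrow> 'site" where
  "ancestry [] = id"
| "ancestry (e # es) = event_parent e \<circ> ancestry es"

lemma ancestry_append: "ancestry (xs @ ys) = ancestry xs \<circ> ancestry ys"
  by (induction xs) (simp_all add: comp_assoc)

lemma apply_event_eq_comp: "apply_event e s = s \<circ> event_parent e"
  by (auto simp: apply_event_def event_parent_def)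

lemma run_events_Nil: "run_events [] s = s"
  by (simp add: run_events_def)

lemma run_events_Cons: "run_events (e # es) s = run_events es (apply_event e s)"
  by (simp add: run_events_def)

lemma run_events_eq_comp_ancestry: "run_events es s = s \<circ> ancestry es"
  by (induction es arbitrary: s) (simp_all add: run_events_Nil run_events_Cons apply_event_eq_comp comp_assoc)

lemma run_events_all_True_iff: "run_events es s = (\<lambda>_. True) \<longleftrightarrow> (\<forall>x. s (ancestry es x))"
  by (auto simp: run_events_eq_comp_ancestry fun_eq_iff)

lemma ancestry_stake_add:
  "ancestry (stake (n + k) \<omega>) = ancestry (stake n \<omega>) \<circ> ancestry (stake k (sdrop n \<omega>))"
  by (simp only: stake_add[symmetric] ancestry_append)

lemma fixation_assumption_ancestry_const:
  assumes "fixation_assumption p"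
  obtains c es where "\<forall>e\<in>set es. pmf p e > 0" "ancestry es = (\<lambda>_. c)"
proof -
  obtain c es where pos: "\<forall>e\<in>set es. pmf p e > 0"
    and run: "\<forall>s j. run_events es s j = s c"
  proof -
    from assms obtain c es where "(\<forall>e\<in>set es. pmf p e > 0) \<and> (\<forall>s j. run_events es s j = s c)"
      unfolding fixation_assumption_def by (elim exE)
    then show ?thesis using that by (elim conjE)
  qed
  have "ancestry es = (\<lambda>_. c)"
  proof
    fix x
    show "ancestry es x = c"
      using run[rule_format, of "\<lambda>k. k = ancestry es x" x] by (simp add: run_events_eq_comp_ancestry)
  qed
  with pos show thesis by (rule that)
qed

definition fixation_event :: "'site state \<Rightarrow> 'site event stream set" where
  "fixation_event s = {\<omega>. \<exists>n. run_events (stake n \<omega>) s = (\<lambda>_. True)}"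

lemma fix_prob_eq_measure_fixation_event:
  "fix_prob p i = measure (pmf_streams p) (fixation_event (\<lambda>j. j = i))"
  by (simp add: fix_prob_def fixation_event_def)

lemma sets_fixation_event:
  "fixation_event s \<in> sets (pmf_streams (p :: ('site::finite) event pmf))"
proof -
  have "fixation_event s = (\<Union>n. {\<omega>. run_events (stake n \<omega>) s = (\<lambda>_. True)})"
    by (auto simp: fixation_event_def)
  moreover have "{\<omega>. run_events (stake n \<omega>) s = (\<lambda>_. True)} \<in> sets (pmf_streams p)" for n
    using sets_pmf_streams_stake[of "\<lambda>es. run_events es s = (\<lambda>_. True)"] by simp
  ultimately show ?thesis
    by (simp add: sets.countable_UN' image_subset_iff)
qed

lemma Cons_in_fixation_event_iff:
  "e ## \<omega> \<in> fixation_event s \<longleftrightarrow> \<omega> \<in> fixation_event (apply_event e s)"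
proof
  assume "e ## \<omega> \<in> fixation_event s"
  then obtain n where n: "run_events (stake n (e ## \<omega>)) s = (\<lambda>_. True)"
    by (auto simp: fixation_event_def)
  show "\<omega> \<in> fixation_event (apply_event e s)"
  proof (cases n)
    case 0
    with n have "run_events (stake 0 \<omega>) (apply_event e s) = (\<lambda>_. True)"
      by (simp add: run_events_Nil apply_event_def fun_eq_iff)
    then show ?thesis
      unfolding fixation_event_def by blast
  next
    case (Suc m)
    with n have "run_events (stake m \<omega>) (apply_event e s) = (\<lambda>_. True)"
      by (simp add: run_events_Cons)
    then show ?thesis
      unfolding fixation_event_def by blast
  qed
next
  assume "\<omega> \<in> fixation_event (apply_event e s)"
  then obtain m where "run_events (stake m \<omega>) (apply_event e s) = (\<lambda>_. True)"
    by (auto simp: fixation_event_def)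
  then have "run_events (stake (Suc m) (e ## \<omega>)) s = (\<lambda>_. True)"
    by (simp add: run_events_Cons)
  then show "e ## \<omega> \<in> fixation_event s"
    unfolding fixation_event_def by blast
qed

lemma measure_fixation_event_first_step:
  fixes p :: "('site::finite) event pmf"
  shows "measure (pmf_streams p) (fixation_event s)
    = (\<Sum>e\<in>UNIV. pmf p e * measure (pmf_streams p) (fixation_event (apply_event e s)))"
  by (subst measure_pmf_streams_Cons[OF sets_fixation_event]) (simp add: Cons_in_fixation_event_iff)

lemma in_fixation_event_iff_coalesced:
  assumes coal: "ancestry (stake n \<omega>) = (\<lambda>_. c)"
  shows "\<omega> \<in> fixation_event s \<longleftrightarrow> s c"
proof
  assume "\<omega> \<in> fixation_event s"
  then obtain m where m: "\<forall>x. s (ancestry (stake m \<omega>) x)"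
    by (auto simp: fixation_event_def run_events_all_True_iff)
  have "ancestry (stake (m + n) \<omega>) = ancestry (stake m \<omega>) \<circ> ancestry (stake n (sdrop m \<omega>))"
    by (rule ancestry_stake_add)
  moreover have "ancestry (stake (n + m) \<omega>) = (\<lambda>_. c)"
    by (simp add: ancestry_stake_add coal comp_def)
  ultimately show "s c"
    using m by (metis add.commute comp_apply)
next
  assume "s c"
  with coal have "run_events (stake n \<omega>) s = (\<lambda>_. True)"
    by (simp add: run_events_all_True_iff)
  then show "\<omega> \<in> fixation_event s"
    unfolding fixation_event_def by blast
qed

lemma in_fixation_event_single_iff:
  "\<omega> \<in> fixation_event (\<lambda>k. k = j) \<longleftrightarrow> (\<exists>n. ancestry (stake n \<omega>) = (\<lambda>_. j))"
  unfolding fixation_event_def run_events_all_True_iff by (auto simp: fun_eq_iff)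

lemma fixation_event_single_disjoint:
  assumes "a \<noteq> b"
  shows "fixation_event (\<lambda>k. k = a) \<inter> fixation_event (\<lambda>k. k = b) = {}"
proof (intro equalityI subsetI)
  fix \<omega> assume "\<omega> \<in> fixation_event (\<lambda>k. k = a) \<inter> fixation_event (\<lambda>k. k = b)"
  then obtain n where "ancestry (stake n \<omega>) = (\<lambda>_. a)" "\<omega> \<in> fixation_event (\<lambda>k. k = b)"
    by (auto simp: in_fixation_event_single_iff)
  with assms show "\<omega> \<in> {}"
    by (simp add: in_fixation_event_iff_coalesced)
qed simp

lemma AE_ancestry_eventually_const:
  fixes p :: "('site::finite) event pmf"
  assumes "fixation_assumption p"
  shows "AE \<omega> in pmf_streams p. \<exists>n c. ancestry (stake n \<omega>) = (\<lambda>_. c)"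
proof -
  obtain c es where pos: "\<forall>e\<in>set es. pmf p e > 0" and es: "ancestry es = (\<lambda>_. c)"
    using fixation_assumption_ancestry_const[OF assms] .
  have "AE \<omega> in pmf_streams p. \<exists>n. stake n \<omega> \<in> {xs. \<exists>c. ancestry xs = (\<lambda>_. c)}"
  proof (rule AE_pmf_streams_eventually_stake_in[OF _ _ pos])
    show "xs @ ys \<in> {xs. \<exists>c. ancestry xs = (\<lambda>_. c)}"
      if "ys \<in> {xs. \<exists>c. ancestry xs = (\<lambda>_. c)}" for xs ys :: "'site event list"
      using that by (auto simp: ancestry_append comp_def)
  qed (use es in blast)
  then show ?thesis
    by simp
qed

lemma measure_fixation_event_eq_sum:
  fixes p :: "('site::finite) event pmf"
  assumes "fixation_assumption p"
  shows "measure (pmf_streams p) (fixation_event s) = (\<Sum>j | s j. fix_prob p j)"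
proof -
  interpret S: prob_space "pmf_streams p" by (rule prob_space_pmf_streams)
  have "AE \<omega> in pmf_streams p.
      \<omega> \<in> fixation_event s \<longleftrightarrow> \<omega> \<in> (\<Union>j\<in>{j. s j}. fixation_event (\<lambda>k. k = j))"
    using AE_ancestry_eventually_const[OF assms]
  proof (rule AE_mp, intro AE_I2 impI)
    fix \<omega> :: "'site event stream"
    assume "\<exists>n c. ancestry (stake n \<omega>) = (\<lambda>_. c)"
    then obtain n c where "ancestry (stake n \<omega>) = (\<lambda>_. c)"
      by blast
    then show "\<omega> \<in> fixation_event s \<longleftrightarrow> \<omega> \<in> (\<Union>j\<in>{j. s j}. fixation_event (\<lambda>k. k = j))"
      by (simp add: in_fixation_event_iff_coalesced)
  qed
  then have "S.prob (fixation_event s) = S.prob (\<Union>j\<in>{j. s j}. fixation_event (\<lambda>k. k = j))"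
    by (rule measure_eq_AE) (auto intro: sets_fixation_event)
  also have "\<dots> = (\<Sum>j | s j. S.prob (fixation_event (\<lambda>k. k = j)))"
  proof (rule S.finite_measure_finite_Union)
    show "disjoint_family_on (\<lambda>j. fixation_event (\<lambda>k. k = j)) {j. s j}"
      by (simp add: disjoint_family_on_def fixation_event_single_disjoint)
  qed (auto intro: sets_fixation_event)
  finally show ?thesis
    by (simp add: fix_prob_eq_measure_fixation_event)
qed

lemma prob_event_parent_eq:
  "measure_pmf.prob p {e. event_parent e j = i}
    = repl_prob p i j + (if j = i then 1 - death_rate p i else 0)"
proof -
  have "{e. event_parent e j = i}
      = {e. j \<in> fst e \<and> snd e j = i} \<union> {e. j = i \<and> i \<notin> fst e}"
    by (auto simp: event_parent_def)
  also have "measure_pmf.prob p \<dots>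
      = measure_pmf.prob p {e. j \<in> fst e \<and> snd e j = i} + measure_pmf.prob p {e. j = i \<and> i \<notin> fst e}"
    by (rule measure_pmf.finite_measure_Union) auto
  finally have "measure_pmf.prob p {e. event_parent e j = i}
      = repl_prob p i j + measure_pmf.prob p {e. j = i \<and> i \<notin> fst e}"
    by (simp add: repl_prob_def)
  moreover have "{e. i \<notin> fst e} = space (measure_pmf p) - {e. i \<in> fst e}"
    by auto
  then have "measure_pmf.prob p {e. i \<notin> fst e} = 1 - death_rate p i"
    unfolding death_rate_def by (simp only: measure_pmf.prob_compl sets_measure_pmf UNIV_I)
  ultimately show ?thesis
    by simp
qed

lemma fix_prob_first_step:
  fixes p :: "('site::finite) event pmf"
  assumes "fixation_assumption p"
  shows "fix_prob p i = (\<Sum>j\<in>UNIV. measure_pmf.prob p {e. event_parent e j = i} * fix_prob p j)"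
proof -
  have "fix_prob p i
      = (\<Sum>e\<in>UNIV. pmf p e * measure (pmf_streams p) (fixation_event (apply_event e (\<lambda>k. k = i))))"
    unfolding fix_prob_eq_measure_fixation_event by (rule measure_fixation_event_first_step)
  also have "\<dots> = (\<Sum>e\<in>UNIV. pmf p e * (\<Sum>j | event_parent e j = i. fix_prob p j))"
    by (simp add: measure_fixation_event_eq_sum[OF assms] apply_event_eq_comp comp_def)
  also have "\<dots> = (\<Sum>e\<in>UNIV. \<Sum>j\<in>UNIV. if event_parent e j = i then pmf p e * fix_prob p j else 0)"
    by (simp add: sum_distrib_left sum.If_cases)
  also have "\<dots> = (\<Sum>j\<in>UNIV. \<Sum>e\<in>UNIV. if event_parent e j = i then pmf p e * fix_prob p j else 0)"
    by (rule sum.swap)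
  also have "\<dots> = (\<Sum>j\<in>UNIV. measure_pmf.prob p {e. event_parent e j = i} * fix_prob p j)"
    by (simp add: measure_measure_pmf_finite sum_distrib_right sum.If_cases)
  finally show ?thesis .
qed

theorem mainTheorem7:
  fixes p :: "('site::finite) event pmf" and i :: 'site
  assumes "fixation_assumption p"
  shows "death_rate p i * fix_prob p i = (\<Sum>j\<in>UNIV. repl_prob p i j * fix_prob p j)"
proof -
  have "(\<Sum>j\<in>UNIV. (if j = i then 1 - death_rate p i else 0) * fix_prob p j)
      = (1 - death_rate p i) * fix_prob p i"
    by (simp add: if_distrib[of "\<lambda>x. x * _"] cong: if_cong)
  then have "fix_prob p i = (\<Sum>j\<in>UNIV. repl_prob p i j * fix_prob p j) + (1 - death_rate p i) * fix_prob p i"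
    using fix_prob_first_step[OF assms, of i]
    by (simp add: prob_event_parent_eq distrib_right sum.distrib)
  then show ?thesis
    by (simp add: algebra_simps)
qed

end
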